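(* Let $k,\ell\in\mathbb{N}$, $\varepsilon>0$, and let $V$ be a finite set with $n=|V|\ge 2k\ge 2\ell$. If $f\colon\binom{V}{k}\to\mathbb{R}$ satisfies $\max_{\ell\le r\le k}W^r(f)\le\varepsilon$, then there exists $\tilde f\colon\binom{V}{k}\to\mathbb{R}$ such that: (i) for all but at most $5^{k/2}\varepsilon^{1/2}\binom{n}{k}$ sets $R\in\binom{V}{k}$, $|f(R)-\tilde f(R)|\le\varepsilon^{1/2}$; (ii) $W^k(\tilde f)=\cdots=W^{\ell}(\tilde f)=0$.
   Context: An $s$-permutation of $V$ is a sequence of $s$ distinct elements of $V$. For $k,r\in\mathbb{N}$, a finite set $V$ with $|V|\ge 2k\ge 2r$ and $f\colon\binom{V}{k}\to\mathbb{R}$, the level-$r$ weight of $f$ is \[ W^r(f)=\left(\mathbb{E}_{(a_1,b_1,\ldots,a_r,b_r)}\Big(\mathbb{E}_{R}\,(-1)^{|R\cap\{b_1,\ldots,b_r\}|}f(R)\Big)^2\right)^{1/2}, \] where $(a_1,b_1,\ldots,a_r,b_r)$ is a uniformly random $2r$-permutation of $V$, and, given it, $R$ is a uniformly random $k$-subset of $V$ with $|R\cap\{a_i,b_i\}|=1$ for each $i\in[r]$. *)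

theory Defs
  imports Complex_Main
begin

definition avg :: "'b set \<Rightarrow> ('b \<Rightarrow> real) \<Rightarrow> real" where
  "avg S g = (\<Sum>x\<in>S. g x) / real (card S)"

definition ksubsets :: "'a set \<Rightarrow> nat \<Rightarrow> 'a set set" where
  "ksubsets V k = {R. R \<subseteq> V \<and> card R = k}"

definition sperms :: "'a set \<Rightarrow> nat \<Rightarrow> 'a list set" where
  "sperms V s = {xs. length xs = s \<and> distinct xs \<and> set xs \<subseteq> V}"

text \<open>For a 2r-permutation xs = (a_1,b_1,...,a_r,b_r): a_i = xs!(2i), b_i = xs!(2i+1)
  (0-based i < r).\<close>
definition bset :: "'a list \<Rightarrow> nat \<Rightarrow> 'a set" where
  "bset xs r = {xs ! (2*i+1) | i. i < r}"

definition admissible :: "'a set \<Rightarrow> nat \<Rightarrow> nat \<Rightarrow> 'a list \<Rightarrow> 'a set set" where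
  "admissible V k r xs =
     {R \<in> ksubsets V k. \<forall>i<r. card (R \<inter> {xs ! (2*i), xs ! (2*i+1)}) = 1}"

definition level_weight :: "'a set \<Rightarrow> nat \<Rightarrow> nat \<Rightarrow> ('a set \<Rightarrow> real) \<Rightarrow> real" where
  "level_weight V k r f =
     sqrt (avg (sperms V (2*r))
       (\<lambda>xs. (avg (admissible V k r xs)
               (\<lambda>R. (-1) ^ card (R \<inter> bset xs r) * f R))\<^sup>2))"

end

theory Submission
  imports Defs "HOL-Analysis.Convex"
begin

text \<open>
  Project \<open>f\<close> orthogonally onto the functions of degree below \<open>l\<close>, i.e. onto the span of the
  indicators \<open>R \<mapsto> [T \<subseteq> R]\<close> with \<open>|T| < l\<close>; call the projection \<open>g\<close> and put \<open>h = f - g\<close>.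
  The derivative along \<open>r\<close> pairs (the inner expectation in \<open>W\<^sup>r\<close>) kills functions of degree
  below \<open>r\<close> as well as functions orthogonal to all functions of degree at most \<open>r\<close>: peeling off
  one pair \<open>(a, b)\<close> turns it into a derivative along \<open>r - 1\<close> pairs of the pair difference
  \<open>S \<mapsto> (f (S + a) - f (S + b)) / 2\<close> on \<open>V - {a, b}\<close>, which lowers the degree by one.
  Hence \<open>W\<^sup>r(g) = 0\<close> and \<open>W\<^sup>r(h) = W\<^sup>r(f)\<close> for \<open>l \<le> r \<le> k\<close>.

  A component \<open>v\<close> of \<open>h\<close> that is homogeneous of degree \<open>r\<close> satisfies
  \<open>\<bbbE> v\<^sup>2 \<le> 2\<^sup>r (k choose r) W\<^sup>r(v)\<^sup>2\<close>, by induction on \<open>r\<close>: a Poincare inequality bounds \<open>\<bbbE> v\<^sup>2\<close> by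
  the pair differences of \<open>v\<close>, which are homogeneous of degree \<open>r - 1\<close>. The Poincare inequality
  itself comes from the commutation relation between the up and down operators of the Johnson
  scheme. Summing over the homogeneous components gives \<open>\<bbbE> h\<^sup>2 \<le> 3\<^sup>k \<epsilon>\<^sup>2\<close>, and Chebyshev's
  inequality bounds the number of sets \<open>R\<close> with \<open>|h R| > \<surd>\<epsilon>\<close> by
  \<open>min 1 (3\<^sup>k \<epsilon>) (n choose k) \<le> 5\<^bsup>k/2\<^esup> \<surd>\<epsilon> (n choose k)\<close>, where \<open>n = |V|\<close>.
\<close>

lemma sum_eq_card_mult_avg: "sum f S = real (card S) * avg S f"
  by (cases "card S = 0") (auto simp: avg_def card_eq_0_iff)

lemma avg_mono: "(\<And>x. x \<in> S \<Longrightarrow> f x \<le> g x) \<Longrightarrow> avg S f \<le> avg S g"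
  unfolding avg_def by (intro divide_right_mono sum_mono) auto

lemma avg_nonneg: "(\<And>x. x \<in> S \<Longrightarrow> 0 \<le> f x) \<Longrightarrow> 0 \<le> avg S f"
  unfolding avg_def by (intro divide_nonneg_nonneg sum_nonneg) auto

lemma avg_const_mult: "avg S (\<lambda>x. c * f x) = c * avg S f"
  unfolding avg_def by (simp add: sum_distrib_left)

lemma avg_reindex: "inj_on h A \<Longrightarrow> avg (h ` A) F = avg A (F \<circ> h)"
  unfolding avg_def by (simp add: sum.reindex card_image)

lemma avg_Sigma:
  assumes "finite A" and "\<And>a. a \<in> A \<Longrightarrow> finite (B a) \<and> card (B a) = m"
  shows "avg (Sigma A B) F = avg A (\<lambda>a. avg (B a) (\<lambda>b. F (a, b)))"
proof -
  have "card (Sigma A B) = card A * m"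
    using assms by (simp add: card_SigmaI)
  moreover have "sum F (Sigma A B) = (\<Sum>a\<in>A. \<Sum>b\<in>B a. F (a, b))"
    using assms by (subst sum.Sigma) auto
  ultimately show ?thesis
    using assms by (simp add: avg_def sum_divide_distrib[symmetric])
qed

lemma avg_cong: "A = B \<Longrightarrow> (\<And>x. x \<in> B \<Longrightarrow> f x = g x) \<Longrightarrow> avg A f = avg B g"
  unfolding avg_def by simp

lemma avg_uminus: "avg A (\<lambda>x. - f x) = - avg A f"
  by (simp add: avg_def sum_negf)

lemma avg_half_diff: "(avg A f - avg A g) / 2 = avg A (\<lambda>x. (f x - g x) / 2)"
proof -
  have "(\<Sum>x\<in>A. (f x - g x) / 2) = (sum f A - sum g A) / 2"
    by (simp add: sum_subtractf sum_divide_distrib[symmetric])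
  then show ?thesis by (simp add: avg_def diff_divide_distrib)
qed

lemma avg_Un_images:
  assumes "finite A" "inj_on g A" "inj_on h A" "g ` A \<inter> h ` A = {}"
  shows "avg (g ` A \<union> h ` A) F = (avg A (F \<circ> g) + avg A (F \<circ> h)) / 2"
  using assms by (simp add: avg_def sum.union_disjoint card_Un_disjoint sum.reindex card_image
      add_divide_distrib)

definition inner_on :: "'b set \<Rightarrow> ('b \<Rightarrow> real) \<Rightarrow> ('b \<Rightarrow> real) \<Rightarrow> real" where
  "inner_on X x y = (\<Sum>R\<in>X. x R * y R)"

lemma inner_on_commute: "inner_on X x y = inner_on X y x"
  by (simp add: inner_on_def mult.commute)

lemma inner_on_diff_left: "inner_on X (\<lambda>R. x R - y R) z = inner_on X x z - inner_on X y z"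
  by (simp add: inner_on_def left_diff_distrib sum_subtractf)

lemma inner_on_diff_right: "inner_on X x (\<lambda>R. y R - z R) = inner_on X x y - inner_on X x z"
  by (simp add: inner_on_def right_diff_distrib sum_subtractf)

lemma inner_on_add_right: "inner_on X x (\<lambda>R. y R + z R) = inner_on X x y + inner_on X x z"
  by (simp add: inner_on_def distrib_left sum.distrib)

lemma inner_on_scale_left: "inner_on X (\<lambda>R. c * x R) y = c * inner_on X x y"
  by (simp add: inner_on_def sum_distrib_left mult.assoc)

lemma inner_on_scale_right: "inner_on X x (\<lambda>R. c * y R) = c * inner_on X x y"
  by (simp add: inner_on_def sum_distrib_left mult.left_commute)

lemma inner_on_self_eq_0:
  assumes "finite X" "inner_on X x x = 0" "R \<in> X"
  shows "x R = 0"
proof -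
  have "(\<Sum>R\<in>X. (x R)\<^sup>2) = 0" using assms(2) by (simp add: inner_on_def power2_eq_square)
  then show ?thesis using assms(1,3) by (simp add: sum_nonneg_eq_0_iff)
qed

lemma inner_on_eq_0_if_self_eq_0:
  assumes "inner_on X x x = 0"
  shows "inner_on X y x = 0"
proof (cases "finite X")
  case True
  have "x R = 0" if "R \<in> X" for R by (rule inner_on_self_eq_0[OF True assms that])
  then show ?thesis by (simp add: inner_on_def)
qed (simp add: inner_on_def)

text \<open>\<open>g\<close> is the orthogonal projection of \<open>f\<close> onto the span of \<open>B\<close>, the span being described as
  the double orthogonal complement of \<open>B\<close>.\<close>
definition orth_proj_on :: "'b set \<Rightarrow> ('b \<Rightarrow> real) set \<Rightarrow> ('b \<Rightarrow> real) \<Rightarrow> ('b \<Rightarrow> real) \<Rightarrow> bool" where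
  "orth_proj_on X B f g \<longleftrightarrow>
     (\<forall>x. (\<forall>b\<in>B. inner_on X x b = 0) \<longrightarrow> inner_on X x g = 0)
     \<and> (\<forall>b\<in>B. inner_on X (\<lambda>R. f R - g R) b = 0)"

text \<open>Gram--Schmidt step: \<open>u'\<close> is the component of \<open>u\<close> orthogonal to \<open>B\<close>. If \<open>u'\<close> vanishes
  on \<open>X\<close>, then \<open>c = 0\<close> by division by zero, and \<open>g0\<close> already is the projection.\<close>
lemma orth_proj_on_insert:
  assumes g0: "orth_proj_on X B f g0" and g1: "orth_proj_on X B u g1"
  defines "u' \<equiv> \<lambda>R. u R - g1 R"
  defines "c \<equiv> inner_on X (\<lambda>R. f R - g0 R) u' / inner_on X u' u'"
  shows "orth_proj_on X (insert u B) f (\<lambda>R. g0 R + c * u' R)"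
proof -
  define g where "g = (\<lambda>R. g0 R + c * u' R)"
  have u_eq: "u = (\<lambda>R. g1 R + u' R)" by (simp add: u'_def)
  have f_g: "(\<lambda>R. f R - g R) = (\<lambda>R. (f R - g0 R) - c * u' R)"
    by (simp add: g_def algebra_simps)
  have u'_B: "inner_on X u' b = 0" if "b \<in> B" for b
    using g1 that by (simp add: orth_proj_on_def u'_def)
  have "inner_on X x g = 0" if x: "\<forall>b\<in>insert u B. inner_on X x b = 0" for x
  proof -
    have "inner_on X x u' = 0"
      using g1 x by (simp add: orth_proj_on_def u'_def inner_on_diff_right)
    then show ?thesis using g0 x by (simp add: orth_proj_on_def g_def inner_on_add_right inner_on_scale_right)
  qed
  moreover have B: "inner_on X (\<lambda>R. f R - g R) b = 0" if "b \<in> B" for b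
    using g0 u'_B that by (simp add: orth_proj_on_def f_g inner_on_diff_left inner_on_scale_left)
  moreover have "inner_on X (\<lambda>R. f R - g R) u = 0"
  proof -
    have "inner_on X (\<lambda>R. f R - g R) g1 = 0" using g1 B by (simp add: orth_proj_on_def)
    moreover have "inner_on X (\<lambda>R. f R - g R) u' = 0"
    proof (cases "inner_on X u' u' = 0")
      case True
      then show ?thesis by (rule inner_on_eq_0_if_self_eq_0)
    next
      case False
      then show ?thesis
        unfolding f_g inner_on_diff_left inner_on_scale_left by (simp add: c_def inner_on_diff_left)
    qed
    ultimately show ?thesis by (simp add: u_eq inner_on_add_right)
  qed
  ultimately show ?thesis by (simp add: orth_proj_on_def g_def)
qed

lemma orth_proj_on_exists: "finite B \<Longrightarrow> \<exists>g. orth_proj_on X B f g"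
proof (induction B arbitrary: f rule: finite_induct)
  case empty
  show ?case by (rule exI[of _ "\<lambda>_. 0"]) (simp add: orth_proj_on_def inner_on_def)
next
  case (insert u B)
  then show ?case using orth_proj_on_insert by blast
qed

lemma finite_ksubsets: "finite V \<Longrightarrow> finite (ksubsets V k)"
  unfolding ksubsets_def by (rule finite_subset[of _ "Pow V"]) auto

lemma card_ksubsets: "finite V \<Longrightarrow> card (ksubsets V k) = card V choose k"
  unfolding ksubsets_def by (simp add: n_subsets)

lemma ksubsetsD:
  assumes "finite V" "R \<in> ksubsets V k"
  shows "R \<subseteq> V" "card R = k" "finite R"
  using assms finite_subset by (auto simp: ksubsets_def)

lemma sum_ksubsets_Suc_double_count:
  assumes "finite V"
  shows "(\<Sum>R\<in>ksubsets V (Suc j). \<Sum>x\<in>R. F R x) = (\<Sum>A\<in>ksubsets V j. \<Sum>x\<in>V - A. F (insert x A) x)"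
proof -
  have "(\<Sum>R\<in>ksubsets V (Suc j). \<Sum>x\<in>R. F R x) = (\<Sum>(R, x)\<in>Sigma (ksubsets V (Suc j)) (\<lambda>R. R). F R x)"
    using assms by (subst sum.Sigma) (auto simp: finite_ksubsets dest: ksubsetsD)
  also have "\<dots> = (\<Sum>(A, x)\<in>Sigma (ksubsets V j) (\<lambda>A. V - A). F (insert x A) x)"
    by (rule sum.reindex_bij_witness[where i="\<lambda>(A, x). (insert x A, x)" and j="\<lambda>(R, x). (R - {x}, x)"])
       (use assms in \<open>auto simp: ksubsets_def card_Diff_singleton insert_absorb dest: finite_subset\<close>)
  also have "\<dots> = (\<Sum>A\<in>ksubsets V j. \<Sum>x\<in>V - A. F (insert x A) x)"
    using assms by (subst sum.Sigma) (auto simp: finite_ksubsets)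
  finally show ?thesis .
qed

lemma sum_nonmembers_insert:
  assumes "finite V" "S \<in> ksubsets V j"
  shows "(\<Sum>x\<in>V - S. F (insert x S)) = (\<Sum>R\<in>{R\<in>ksubsets V (Suc j). S \<subseteq> R}. F R)"
proof -
  have S: "S \<subseteq> V" "card S = j" "finite S" using ksubsetsD[OF assms] by auto
  have "{R\<in>ksubsets V (Suc j). S \<subseteq> R} \<subseteq> (\<lambda>x. insert x S) ` (V - S)"
  proof
    fix R assume R: "R \<in> {R\<in>ksubsets V (Suc j). S \<subseteq> R}"
    then have "card (R - S) = 1"
      using S assms(1) by (auto simp: ksubsets_def card_Diff_subset dest: finite_subset)
    then obtain x where "R - S = {x}" by (auto simp: card_Suc_eq)
    then show "R \<in> (\<lambda>x. insert x S) ` (V - S)" using R by (auto simp: ksubsets_def)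
  qed
  moreover have "(\<lambda>x. insert x S) ` (V - S) \<subseteq> {R\<in>ksubsets V (Suc j). S \<subseteq> R}"
    using S by (auto simp: ksubsets_def)
  moreover have "inj_on (\<lambda>x. insert x S) (V - S)" by (rule inj_onI) blast
  ultimately show ?thesis by (simp add: sum.reindex subset_antisym)
qed

lemma sum_ksubsets_remove_pair_insert:
  assumes "finite V" "a \<in> V" "a \<noteq> b" "1 \<le> k"
  shows "(\<Sum>S\<in>ksubsets (V - {a, b}) (k - 1). F (insert a S))
       = (\<Sum>R\<in>ksubsets V k. if a \<in> R \<and> b \<notin> R then F R else 0)"
proof -
  have fin: "finite S" if "S \<subseteq> V - {a, b}" for S
    using assms(1) finite_subset that by blast
  have "(\<Sum>S\<in>ksubsets (V - {a, b}) (k - 1). F (insert a S)) = (\<Sum>R\<in>{R\<in>ksubsets V k. a \<in> R \<and> b \<notin> R}. F R)"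
    by (rule sum.reindex_bij_witness[where i="\<lambda>R. R - {a}" and j="insert a"])
       (use assms fin in \<open>auto simp: ksubsets_def card_insert_if dest: finite_subset\<close>)
  then show ?thesis using assms(1) by (simp add: sum.inter_filter finite_ksubsets)
qed

lemma sum_sq_diffs:
  fixes u :: "'b \<Rightarrow> real"
  shows "(\<Sum>a\<in>X. \<Sum>b\<in>X. (u a - u b)\<^sup>2) = 2 * real (card X) * (\<Sum>a\<in>X. (u a)\<^sup>2) - 2 * (\<Sum>a\<in>X. u a)\<^sup>2"
proof -
  have "(\<Sum>a\<in>X. \<Sum>b\<in>X. (u a - u b)\<^sup>2)
      = (\<Sum>a\<in>X. \<Sum>b\<in>X. (u a)\<^sup>2) + (\<Sum>a\<in>X. \<Sum>b\<in>X. (u b)\<^sup>2) - 2 * (\<Sum>a\<in>X. \<Sum>b\<in>X. u a * u b)"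
    by (simp add: power2_diff sum.distrib sum_subtractf sum_distrib_left mult.assoc)
  moreover have "(\<Sum>a\<in>X. \<Sum>b\<in>X. (u b)\<^sup>2) = (\<Sum>a\<in>X. \<Sum>b\<in>X. (u a)\<^sup>2)"
    by (rule sum.swap)
  moreover have "(\<Sum>a\<in>X. \<Sum>b\<in>X. u a * u b) = (\<Sum>a\<in>X. u a)\<^sup>2"
    by (simp add: power2_eq_square sum_product)
  ultimately show ?thesis by (simp add: sum_distrib_left mult.assoc)
qed

subsection \<open>The down operator and a Poincare inequality\<close>

text \<open>\<open>h\<close> is orthogonal to every indicator \<open>R \<mapsto> [T \<subseteq> R]\<close> with \<open>|T| < j\<close>, i.e. to all
  functions of degree below \<open>j\<close>.\<close>
definition orth_low_deg :: "'a set \<Rightarrow> nat \<Rightarrow> nat \<Rightarrow> ('a set \<Rightarrow> real) \<Rightarrow> bool" where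
  "orth_low_deg V k j h \<longleftrightarrow>
     (\<forall>T. T \<subseteq> V \<and> card T < j \<longrightarrow> (\<Sum>R\<in>{R\<in>ksubsets V k. T \<subseteq> R}. h R) = 0)"

lemma orth_low_deg_mono: "orth_low_deg V k j' h \<Longrightarrow> j \<le> j' \<Longrightarrow> orth_low_deg V k j h"
  unfolding orth_low_deg_def by auto

lemma orth_low_deg_diff:
  "orth_low_deg V k j x \<Longrightarrow> orth_low_deg V k j y \<Longrightarrow> orth_low_deg V k j (\<lambda>R. x R - y R)"
  unfolding orth_low_deg_def by (simp add: sum_subtractf)

definition down_op :: "'a set \<Rightarrow> ('a set \<Rightarrow> real) \<Rightarrow> 'a set \<Rightarrow> real" where
  "down_op V \<phi> S = (\<Sum>x\<in>V - S. \<phi> (insert x S))"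

definition up_op :: "('a set \<Rightarrow> real) \<Rightarrow> 'a set \<Rightarrow> real" where
  "up_op w R = (\<Sum>x\<in>R. w (R - {x}))"

lemma orth_low_deg_down_op:
  assumes "finite V" "orth_low_deg V (Suc j) l \<phi>"
  shows "orth_low_deg V j l (down_op V \<phi>)"
  unfolding orth_low_deg_def
proof (intro allI impI)
  fix T assume T: "T \<subseteq> V \<and> card T < l"
  have count: "(\<Sum>x\<in>R. if T \<subseteq> R - {x} then \<phi> R else 0) = (if T \<subseteq> R then real (Suc j - card T) * \<phi> R else 0)"
    if "R \<in> ksubsets V (Suc j)" for R
  proof -
    have "R \<inter> {x. T \<subseteq> R - {x}} = (if T \<subseteq> R then R - T else {})" by auto
    then show ?thesis
      using ksubsetsD[OF assms(1) that] by (simp add: sum.If_cases card_Diff_subset finite_subset)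
  qed
  have "(\<Sum>S\<in>{S\<in>ksubsets V j. T \<subseteq> S}. down_op V \<phi> S)
      = (\<Sum>S\<in>ksubsets V j. \<Sum>x\<in>V - S. if T \<subseteq> insert x S - {x} then \<phi> (insert x S) else 0)"
  proof -
    have remove: "insert x S - {x} = S" if "x \<in> V - S" for x S using that by auto
    have if_sum: "(\<Sum>x\<in>A. if P then f x else 0) = (if P then sum f A else (0::real))" for A P f
      by simp
    show ?thesis using assms(1)
      by (simp add: sum.inter_filter finite_ksubsets down_op_def remove if_sum cong: sum.cong_simp)
  qed
  also have "\<dots> = (\<Sum>R\<in>ksubsets V (Suc j). \<Sum>x\<in>R. if T \<subseteq> R - {x} then \<phi> R else 0)"
    by (rule sum_ksubsets_Suc_double_count[OF assms(1), symmetric])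
  also have "\<dots> = (\<Sum>R\<in>ksubsets V (Suc j). if T \<subseteq> R then real (Suc j - card T) * \<phi> R else 0)"
    using count by (rule sum.cong[OF refl])
  also have "\<dots> = real (Suc j - card T) * (\<Sum>R\<in>{R\<in>ksubsets V (Suc j). T \<subseteq> R}. \<phi> R)"
    using assms(1) by (simp add: sum.inter_filter[symmetric] finite_ksubsets sum_distrib_left)
  also have "\<dots> = 0" using assms(2) T unfolding orth_low_deg_def by simp
  finally show "(\<Sum>S\<in>{S\<in>ksubsets V j. T \<subseteq> S}. down_op V \<phi> S) = 0" .
qed

lemma sum_down_op_mult:
  assumes "finite V"
  shows "(\<Sum>A\<in>ksubsets V j. down_op V \<phi> A * w A) = (\<Sum>R\<in>ksubsets V (Suc j). \<phi> R * up_op w R)"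
proof -
  have "(\<Sum>A\<in>ksubsets V j. down_op V \<phi> A * w A)
      = (\<Sum>A\<in>ksubsets V j. \<Sum>x\<in>V - A. \<phi> (insert x A) * w (insert x A - {x}))"
    by (auto simp: down_op_def sum_distrib_right intro!: sum.cong)
  also have "\<dots> = (\<Sum>R\<in>ksubsets V (Suc j). \<Sum>x\<in>R. \<phi> R * w (R - {x}))"
    by (rule sum_ksubsets_Suc_double_count[OF assms, symmetric])
  finally show ?thesis by (simp add: up_op_def sum_distrib_left)
qed

lemma sum_sq_up_op:
  assumes "finite V"
  shows "(\<Sum>R\<in>ksubsets V (Suc (Suc j)). (up_op w R)\<^sup>2)
       = (real (card V) - real (Suc j)) * (\<Sum>A\<in>ksubsets V (Suc j). (w A)\<^sup>2)
         + (\<Sum>A\<in>ksubsets V (Suc j). \<Sum>x\<in>V - A. \<Sum>y\<in>A. w A * w (insert x (A - {y})))"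
proof -
  let ?K = "ksubsets V (Suc j)"
  have fiber: "(\<Sum>y\<in>insert x A. w (insert x A - {x}) * w (insert x A - {y}))
      = (w A)\<^sup>2 + (\<Sum>y\<in>A. w A * w (insert x (A - {y})))" if "A \<in> ?K" "x \<in> V - A" for A x
  proof -
    have "finite A" using ksubsetsD[OF assms that(1)] by simp
    moreover have "insert x A - {y} = insert x (A - {y})" if "y \<in> A" for y
      using that \<open>x \<in> V - A\<close> by auto
    ultimately show ?thesis
      using that(2) by (simp add: power2_eq_square insert_Diff_if cong: sum.cong_simp)
  qed
  have card_diff: "real (card (V - A)) = real (card V) - real (Suc j)" if "A \<in> ?K" for A
  proof -
    have "A \<subseteq> V" "card A = Suc j" "finite A" using ksubsetsD[OF assms that] by auto
    moreover have "card A \<le> card V" using assms \<open>A \<subseteq> V\<close> by (rule card_mono)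
    ultimately show ?thesis by (simp add: card_Diff_subset of_nat_diff)
  qed
  have "(\<Sum>R\<in>ksubsets V (Suc (Suc j)). (up_op w R)\<^sup>2)
      = (\<Sum>R\<in>ksubsets V (Suc (Suc j)). \<Sum>x\<in>R. \<Sum>y\<in>R. w (R - {x}) * w (R - {y}))"
    by (simp add: up_op_def power2_eq_square sum_product)
  also have "\<dots> = (\<Sum>A\<in>?K. \<Sum>x\<in>V - A. \<Sum>y\<in>insert x A. w (insert x A - {x}) * w (insert x A - {y}))"
    by (rule sum_ksubsets_Suc_double_count[OF assms])
  also have "\<dots> = (\<Sum>A\<in>?K. \<Sum>x\<in>V - A. (w A)\<^sup>2 + (\<Sum>y\<in>A. w A * w (insert x (A - {y}))))"
    by (intro sum.cong refl fiber)
  also have "\<dots> = (\<Sum>A\<in>?K. (real (card V) - real (Suc j)) * (w A)\<^sup>2)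
                 + (\<Sum>A\<in>?K. \<Sum>x\<in>V - A. \<Sum>y\<in>A. w A * w (insert x (A - {y})))"
    by (simp add: sum.distrib card_diff cong: sum.cong_simp)
  finally show ?thesis by (simp add: sum_distrib_left)
qed

lemma sum_sq_down_op:
  assumes "finite V"
  shows "(\<Sum>S\<in>ksubsets V j. (down_op V w S)\<^sup>2)
       = real (Suc j) * (\<Sum>A\<in>ksubsets V (Suc j). (w A)\<^sup>2)
         + (\<Sum>A\<in>ksubsets V (Suc j). \<Sum>x\<in>V - A. \<Sum>y\<in>A. w A * w (insert x (A - {y})))"
proof -
  let ?K = "ksubsets V (Suc j)"
  let ?F = "\<lambda>A z. \<Sum>z'\<in>V - (A - {z}). w A * w (insert z' (A - {z}))"
  have fiber: "?F A z = (w A)\<^sup>2 + (\<Sum>z'\<in>V - A. w A * w (insert z' (A - {z})))"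
    if "A \<in> ?K" "z \<in> A" for A z
  proof -
    have "V - (A - {z}) = insert z (V - A)" "insert z (A - {z}) = A"
      using that ksubsetsD[OF assms that(1)] by auto
    then show ?thesis using assms that(2) by (simp add: power2_eq_square)
  qed
  have "(\<Sum>S\<in>ksubsets V j. (down_op V w S)\<^sup>2) = (\<Sum>S\<in>ksubsets V j. \<Sum>z\<in>V - S. ?F (insert z S) z)"
  proof (intro sum.cong refl)
    fix S assume "S \<in> ksubsets V j"
    have "insert z S - {z} = S" if "z \<in> V - S" for z using that by auto
    then show "(down_op V w S)\<^sup>2 = (\<Sum>z\<in>V - S. ?F (insert z S) z)"
      by (simp add: down_op_def power2_eq_square sum_product cong: sum.cong_simp)
  qed
  also have "\<dots> = (\<Sum>A\<in>?K. \<Sum>z\<in>A. ?F A z)"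
    by (rule sum_ksubsets_Suc_double_count[OF assms, symmetric])
  also have "\<dots> = (\<Sum>A\<in>?K. \<Sum>z\<in>A. (w A)\<^sup>2 + (\<Sum>z'\<in>V - A. w A * w (insert z' (A - {z}))))"
    by (intro sum.cong refl fiber)
  also have "\<dots> = (\<Sum>A\<in>?K. real (Suc j) * (w A)\<^sup>2)
                 + (\<Sum>A\<in>?K. \<Sum>z'\<in>V - A. \<Sum>z\<in>A. w A * w (insert z' (A - {z})))"
    by (simp add: sum.distrib ksubsets_def sum.swap[where A="_ - _"] cong: sum.cong_simp)
  finally show ?thesis by (simp add: sum_distrib_left)
qed

lemma sum_sq_up_op_eq:
  assumes "finite V"
  shows "(\<Sum>R\<in>ksubsets V (Suc (Suc j)). (up_op w R)\<^sup>2)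
       = (\<Sum>S\<in>ksubsets V j. (down_op V w S)\<^sup>2)
         + (real (card V) - 2 * real (Suc j)) * (\<Sum>A\<in>ksubsets V (Suc j). (w A)\<^sup>2)"
  unfolding sum_sq_up_op[OF assms] sum_sq_down_op[OF assms] by (simp add: algebra_simps)

lemma down_op_eq_0_if_orth_low_deg:
  assumes "finite V" "orth_low_deg V (Suc j) (Suc j) \<phi>" "S \<in> ksubsets V j"
  shows "down_op V \<phi> S = 0"
proof -
  have "down_op V \<phi> S = (\<Sum>R\<in>{R\<in>ksubsets V (Suc j). S \<subseteq> R}. \<phi> R)"
    unfolding down_op_def by (rule sum_nonmembers_insert[OF assms(1,3)])
  also have "\<dots> = 0"
    using assms(2,3) by (simp add: orth_low_deg_def ksubsets_def)
  finally show ?thesis .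
qed

lemma sum_sq_down_op_sq_le:
  assumes "finite V"
  shows "(\<Sum>A\<in>ksubsets V j. (down_op V \<phi> A)\<^sup>2)\<^sup>2
       \<le> (\<Sum>R\<in>ksubsets V (Suc j). (\<phi> R)\<^sup>2) * (\<Sum>R\<in>ksubsets V (Suc j). (up_op (down_op V \<phi>) R)\<^sup>2)"
proof -
  have "(\<Sum>A\<in>ksubsets V j. (down_op V \<phi> A)\<^sup>2) = (\<Sum>R\<in>ksubsets V (Suc j). \<phi> R * up_op (down_op V \<phi>) R)"
    using sum_down_op_mult[OF assms, where j=j and \<phi>=\<phi> and w="down_op V \<phi>"]
    by (simp add: power2_eq_square)
  then show ?thesis by (simp add: Cauchy_Schwarz_ineq_sum)
qed

text \<open>Induction on \<open>j\<close> with \<open>w = down_op V \<phi>\<close>: Cauchy--Schwarz bounds \<open>\<parallel>w\<parallel>\<^sup>2\<close> by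
  \<open>\<parallel>\<phi>\<parallel> \<parallel>up_op w\<parallel>\<close>, and \<open>\<parallel>up_op w\<parallel>\<^sup>2 = \<parallel>down_op V w\<parallel>\<^sup>2 + (n - 2j) \<parallel>w\<parallel>\<^sup>2\<close> is bounded by
  the induction hypothesis for \<open>w\<close>.\<close>
lemma sum_sq_down_op_le:
  assumes "finite V" "1 \<le> l" "l \<le> j" "2 * j \<le> card V" "orth_low_deg V j l \<phi>"
  shows "(\<Sum>S\<in>ksubsets V (j - 1). (down_op V \<phi> S)\<^sup>2)
       \<le> real (j - l) * (real (card V) - real j - real l + 1) * (\<Sum>R\<in>ksubsets V j. (\<phi> R)\<^sup>2)"
  using assms(3-5)
proof (induction j arbitrary: \<phi>)
  case 0
  then show ?case using assms(2) by simp
next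
  case (Suc j)
  show ?case
  proof (cases "l = Suc j")
    case True
    then show ?thesis using down_op_eq_0_if_orth_low_deg[OF assms(1)] Suc.prems(3) by simp
  next
    case False
    then have "l \<le> j" "1 \<le> j" using Suc.prems(1) assms(2) by auto
    define w where "w = down_op V \<phi>"
    define a where "a = (\<Sum>A\<in>ksubsets V j. (w A)\<^sup>2)"
    define b where "b = (\<Sum>R\<in>ksubsets V (Suc j). (\<phi> R)\<^sup>2)"
    define d where "d = real (Suc j - l) * (real (card V) - real (Suc j) - real l + 1)"
    have "orth_low_deg V j l w"
      unfolding w_def by (rule orth_low_deg_down_op[OF assms(1) Suc.prems(3)])
    then have "(\<Sum>S\<in>ksubsets V (j - 1). (down_op V w S)\<^sup>2)
        \<le> real (j - l) * (real (card V) - real j - real l + 1) * a"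
      using Suc.IH[OF \<open>l \<le> j\<close>] Suc.prems(2) by (simp add: a_def)
    then have "(\<Sum>R\<in>ksubsets V (Suc j). (up_op w R)\<^sup>2) \<le> d * a"
      using sum_sq_up_op_eq[OF assms(1), where j="j - 1" and w=w] \<open>1 \<le> j\<close> \<open>l \<le> j\<close>
      by (simp add: a_def d_def of_nat_diff algebra_simps)
    then have "a * a \<le> a * (d * b)"
      using sum_sq_down_op_sq_le[OF assms(1), where j=j and \<phi>=\<phi>] mult_left_mono[of _ _ b]
      by (fastforce simp: a_def b_def w_def power2_eq_square sum_nonneg algebra_simps)
    moreover have "0 \<le> d" unfolding d_def using \<open>l \<le> j\<close> Suc.prems(2) by simp
    moreover have "0 \<le> a" "0 \<le> b" by (simp_all add: a_def b_def sum_nonneg)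
    ultimately have "a \<le> d * b"
      by (cases "a = 0") (simp_all add: mult_le_cancel_left_pos)
    then show ?thesis by (simp add: a_def b_def d_def w_def)
  qed
qed

definition distinct_pairs :: "'a set \<Rightarrow> ('a \<times> 'a) set" where
  "distinct_pairs V = {(a, b) \<in> V \<times> V. a \<noteq> b}"

lemma finite_distinct_pairs: "finite V \<Longrightarrow> finite (distinct_pairs V)"
  unfolding distinct_pairs_def by (rule finite_subset[of _ "V \<times> V"]) auto

lemma card_distinct_pairs: "finite V \<Longrightarrow> card (distinct_pairs V) = card V * (card V - 1)"
proof -
  assume "finite V"
  have "distinct_pairs V = Sigma V (\<lambda>a. V - {a})" by (auto simp: distinct_pairs_def)
  then show ?thesis using \<open>finite V\<close> by (simp add: card_Diff_singleton)
qed

lemma card_remove_distinct_pair: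
  "finite V \<Longrightarrow> (a, b) \<in> distinct_pairs V \<Longrightarrow> card (V - {a, b}) = card V - 2"
  by (auto simp: distinct_pairs_def card_Diff_subset)

lemma sum_distinct_pairs_ksubsets:
  assumes "finite V"
  shows "(\<Sum>(a, b)\<in>distinct_pairs V. \<Sum>S\<in>ksubsets (V - {a, b}) m. G a b S)
       = (\<Sum>S\<in>ksubsets V m. \<Sum>a\<in>V - S. \<Sum>b\<in>V - S - {a}. G a b S)"
proof -
  have "(\<Sum>(a, b)\<in>distinct_pairs V. \<Sum>S\<in>ksubsets (V - {a, b}) m. G a b S)
      = (\<Sum>p\<in>distinct_pairs V. \<Sum>S\<in>ksubsets (V - {fst p, snd p}) m. G (fst p) (snd p) S)"
    by (simp add: split_beta)
  also have "\<dots> = (\<Sum>(p, S)\<in>Sigma (distinct_pairs V) (\<lambda>p. ksubsets (V - {fst p, snd p}) m). G (fst p) (snd p) S)"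
    using assms by (intro sum.Sigma) (auto simp: finite_distinct_pairs finite_ksubsets)
  also have "\<dots> = (\<Sum>(S, p)\<in>Sigma (ksubsets V m) (\<lambda>S. Sigma (V - S) (\<lambda>a. V - S - {a})). G (fst p) (snd p) S)"
    by (rule sum.reindex_bij_witness[where i="\<lambda>(S, p). (p, S)" and j="\<lambda>(p, S). (S, p)"])
       (auto simp: distinct_pairs_def ksubsets_def)
  also have "\<dots> = (\<Sum>S\<in>ksubsets V m. \<Sum>(a, b)\<in>Sigma (V - S) (\<lambda>a. V - S - {a}). G a b S)"
    using assms by (subst sum.Sigma) (auto simp: finite_ksubsets split_beta)
  also have "\<dots> = (\<Sum>S\<in>ksubsets V m. \<Sum>a\<in>V - S. \<Sum>b\<in>V - S - {a}. G a b S)"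
    using assms by (subst sum.Sigma) auto
  finally show ?thesis .
qed

lemma binomial_double_absorption:
  assumes "1 \<le> k" "k \<le> N"
  shows "real ((N - 2) choose (k - 1)) * (real N * (real N - 1)) = real k * (real N - real k) * real (N choose k)"
proof -
  have "k * (N choose k) = N * ((N - 1) choose (k - 1))"
    using binomial_absorption[of "k - 1" N] assms(1) by simp
  moreover have "(N - k) * ((N - 1) choose (k - 1)) = (N - 1) * ((N - 2) choose (k - 1))"
    using binomial_absorb_comp[of "N - 1" "k - 1"] assms(1) by (simp add: numeral_2_eq_2)
  ultimately have "k * (N - k) * (N choose k) = N * (N - 1) * ((N - 2) choose (k - 1))"
    by (metis mult.assoc mult.left_commute)
  then have "real (k * (N - k) * (N choose k)) = real (N * (N - 1) * ((N - 2) choose (k - 1)))"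
    by (rule arg_cong)
  then show ?thesis using assms by (simp add: of_nat_diff)
qed

lemma sum_distinct_pairs_ksubsets_eq_avg:
  assumes "finite V" "1 \<le> k" "k \<le> card V"
  shows "(\<Sum>(a, b)\<in>distinct_pairs V. \<Sum>S\<in>ksubsets (V - {a, b}) (k - 1). F a b S)
       = real k * (real (card V) - real k) * real (card V choose k)
         * avg (distinct_pairs V) (\<lambda>(a, b). avg (ksubsets (V - {a, b}) (k - 1)) (F a b))"
proof -
  define N where "N = card V"
  have "(\<Sum>(a, b)\<in>distinct_pairs V. \<Sum>S\<in>ksubsets (V - {a, b}) (k - 1). F a b S)
      = (\<Sum>(a, b)\<in>distinct_pairs V. real ((N - 2) choose (k - 1)) * avg (ksubsets (V - {a, b}) (k - 1)) (F a b))"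
    using assms(1)
    by (intro sum.cong refl)
       (auto simp: sum_eq_card_mult_avg[of _ "ksubsets _ _"] card_ksubsets card_remove_distinct_pair N_def)
  also have "\<dots> = real ((N - 2) choose (k - 1)) * real (card (distinct_pairs V))
      * avg (distinct_pairs V) (\<lambda>(a, b). avg (ksubsets (V - {a, b}) (k - 1)) (F a b))"
    by (simp add: sum_distrib_left[symmetric] sum_eq_card_mult_avg[of _ "distinct_pairs V"] case_prod_unfold)
  also have "real ((N - 2) choose (k - 1)) * real (card (distinct_pairs V)) = real k * (real N - real k) * real (N choose k)"
    using assms binomial_double_absorption[OF assms(2), of N]
    by (simp add: card_distinct_pairs N_def of_nat_diff)
  finally show ?thesis by (simp add: N_def)
qed

definition pair_diff :: "'a \<Rightarrow> 'a \<Rightarrow> ('a set \<Rightarrow> real) \<Rightarrow> 'a set \<Rightarrow> real" where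
  "pair_diff a b f S = (f (insert a S) - f (insert b S)) / 2"

text \<open>For a fixed \<open>(k - 1)\<close>-set \<open>S\<close>, the squared pair differences at \<open>S\<close> add up to a variance,
  \<open>(n - k + 1) \<Sum>\<^sub>a h (S + a)\<^sup>2 - (down_op V h S)\<^sup>2\<close> up to a factor; the last term is controlled
  by \<open>sum_sq_down_op_le\<close>.\<close>
lemma poincare_sum:
  assumes "finite V" "1 \<le> l" "l \<le> k" "2 * k \<le> card V" "orth_low_deg V k l h"
  shows "real l * (real (card V) + 1 - real l) / 2 * (\<Sum>R\<in>ksubsets V k. (h R)\<^sup>2)
       \<le> (\<Sum>(a, b)\<in>distinct_pairs V. \<Sum>S\<in>ksubsets (V - {a, b}) (k - 1). (pair_diff a b h S)\<^sup>2)"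
proof -
  obtain m where k: "k = Suc m" using assms(2,3) by (cases k) auto
  define N where "N = real (card V)"
  define H where "H = (\<Sum>R\<in>ksubsets V k. (h R)\<^sup>2)"
  define D where "D = (\<Sum>S\<in>ksubsets V m. (down_op V h S)\<^sup>2)"
  have fiber: "(\<Sum>a\<in>V - S. \<Sum>b\<in>V - S - {a}. (pair_diff a b h S)\<^sup>2)
      = ((N - real m) * (\<Sum>a\<in>V - S. (h (insert a S))\<^sup>2) - (down_op V h S)\<^sup>2) / 2"
    if "S \<in> ksubsets V m" for S
  proof -
    have "real (card (V - S)) = N - real m"
      using ksubsetsD[OF assms(1) that] assms(1,4) k
      by (simp add: N_def card_Diff_subset of_nat_diff card_mono)
    moreover have "(\<Sum>b\<in>V - S - {a}. (pair_diff a b h S)\<^sup>2) = (\<Sum>b\<in>V - S. (pair_diff a b h S)\<^sup>2)"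
      if "a \<in> V - S" for a
      using that assms(1) by (simp add: sum.remove[of "V - S" a] pair_diff_def)
    ultimately show ?thesis
      using sum_sq_diffs[of "\<lambda>a. h (insert a S)" "V - S"]
      by (simp add: pair_diff_def power_divide sum_divide_distrib[symmetric] down_op_def)
  qed
  have "(\<Sum>S\<in>ksubsets V m. \<Sum>a\<in>V - S. (h (insert a S))\<^sup>2) = real k * H"
    using sum_ksubsets_Suc_double_count[OF assms(1), where j=m and F="\<lambda>R _. (h R)\<^sup>2"] k
    by (simp add: H_def ksubsets_def sum_distrib_left)
  then have "(\<Sum>(a, b)\<in>distinct_pairs V. \<Sum>S\<in>ksubsets (V - {a, b}) (k - 1). (pair_diff a b h S)\<^sup>2)
      = ((N - real m) * (real k * H) - D) / 2"
    by (simp add: sum_distinct_pairs_ksubsets[OF assms(1)] k fiber sum_divide_distrib[symmetric]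
        sum_subtractf sum_distrib_left[symmetric] D_def cong: sum.cong_simp)
  moreover have "D \<le> real (k - l) * (N - real k - real l + 1) * H"
    using sum_sq_down_op_le[OF assms] k by (simp add: N_def H_def D_def)
  moreover have "((N - real m) * (real k * H) - real (k - l) * (N - real k - real l + 1) * H) / 2
      = real l * (N + 1 - real l) / 2 * H"
    using k assms(3) by (simp add: of_nat_diff field_simps)
  ultimately show ?thesis by (simp add: N_def H_def divide_right_mono)
qed

lemma poincare:
  assumes "finite V" "1 \<le> l" "l \<le> k" "2 * k \<le> card V" "orth_low_deg V k l h"
  shows "real l * (real (card V) + 1 - real l) / 2 * avg (ksubsets V k) (\<lambda>R. (h R)\<^sup>2)
       \<le> real k * (real (card V) - real k)
         * avg (distinct_pairs V) (\<lambda>(a, b). avg (ksubsets (V - {a, b}) (k - 1)) (\<lambda>S. (pair_diff a b h S)\<^sup>2))"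
proof -
  have "k \<le> card V" using assms(4) by simp
  then have C: "0 < real (card V choose k)" by simp
  have "real (card V choose k) * (real l * (real (card V) + 1 - real l) / 2 * avg (ksubsets V k) (\<lambda>R. (h R)\<^sup>2))
      \<le> real (card V choose k) * (real k * (real (card V) - real k)
         * avg (distinct_pairs V) (\<lambda>(a, b). avg (ksubsets (V - {a, b}) (k - 1)) (\<lambda>S. (pair_diff a b h S)\<^sup>2)))"
    using poincare_sum[OF assms]
    unfolding sum_eq_card_mult_avg[of _ "ksubsets V k"] card_ksubsets[OF assms(1)]
      sum_distinct_pairs_ksubsets_eq_avg[OF assms(1) order_trans[OF assms(2,3)] \<open>k \<le> card V\<close>]
    by (simp add: algebra_simps)
  then show ?thesis using C by (rule mult_left_le_imp_le)
qed

subsection \<open>Derivatives along pairs\<close>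

definition level_deriv :: "'a set \<Rightarrow> nat \<Rightarrow> nat \<Rightarrow> 'a list \<Rightarrow> ('a set \<Rightarrow> real) \<Rightarrow> real" where
  "level_deriv V k r xs f = avg (admissible V k r xs) (\<lambda>R. (-1) ^ card (R \<inter> bset xs r) * f R)"

definition level_weight_sq :: "'a set \<Rightarrow> nat \<Rightarrow> nat \<Rightarrow> ('a set \<Rightarrow> real) \<Rightarrow> real" where
  "level_weight_sq V k r f = avg (sperms V (2 * r)) (\<lambda>xs. (level_deriv V k r xs f)\<^sup>2)"

lemma level_weight_eq_sqrt: "level_weight V k r f = sqrt (level_weight_sq V k r f)"
  by (simp add: level_weight_def level_weight_sq_def level_deriv_def)

lemma level_weight_sq_nonneg: "0 \<le> level_weight_sq V k r f"
  unfolding level_weight_sq_def by (rule avg_nonneg) simp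

lemma finite_sperms: "finite V \<Longrightarrow> finite (sperms V s)"
  unfolding sperms_def by (rule finite_subset[OF _ finite_lists_length_eq[of V s]]) auto

lemma card_sperms:
  assumes "finite W"
  shows "card (sperms W s) = (if s \<le> card W then \<Prod>{card W - s + 1..card W} else 0)"
proof (cases "s \<le> card W")
  case False
  have "sperms W s = {}"
  proof (rule ccontr)
    assume "sperms W s \<noteq> {}"
    then obtain xs where "length xs = s" "distinct xs" "set xs \<subseteq> W" by (auto simp: sperms_def)
    then show False using False card_mono[OF assms] distinct_card by metis
  qed
  then show ?thesis using False by simp
qed (use card_lists_distinct_length_eq[OF assms] in \<open>simp add: sperms_def\<close>)

lemma sperms_Suc_eq_image:
  "sperms V (2 * Suc r)
     = (\<lambda>((a, b), ys). a # b # ys) ` Sigma (distinct_pairs V) (\<lambda>(a, b). sperms (V - {a, b}) (2 * r))"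
proof (intro equalityI subsetI)
  fix xs assume "xs \<in> sperms V (2 * Suc r)"
  then obtain a b ys where "xs = a # b # ys"
    by (auto simp: sperms_def numeral_2_eq_2 length_Suc_conv)
  then show "xs \<in> (\<lambda>((a, b), ys). a # b # ys) ` Sigma (distinct_pairs V) (\<lambda>(a, b). sperms (V - {a, b}) (2 * r))"
    using \<open>xs \<in> sperms V (2 * Suc r)\<close>
    by (auto simp: sperms_def distinct_pairs_def image_iff intro!: bexI[of _ "((a, b), ys)"])
qed (auto simp: sperms_def distinct_pairs_def)

lemma bset_Cons_Cons: "bset (a # b # ys) (Suc r) = insert b (bset ys r)"
proof -
  have "bset (a # b # ys) (Suc r) = (\<lambda>i. (a # b # ys) ! (2 * i + 1)) ` {..<Suc r}"
    by (auto simp: bset_def)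
  also have "\<dots> = insert b ((\<lambda>i. ys ! (2 * i + 1)) ` {..<r})"
    by (simp add: lessThan_Suc_eq_insert_0 image_image)
  finally show ?thesis by (auto simp: bset_def)
qed

lemma sperms_pair_subset:
  assumes "ys \<in> sperms W (2 * r)" "i < r"
  shows "{ys ! (2 * i), ys ! (2 * i + 1)} \<subseteq> W"
proof -
  have "length ys = 2 * r" "set ys \<subseteq> W" using assms(1) by (auto simp: sperms_def)
  then have "{ys ! (2 * i), ys ! (2 * i + 1)} \<subseteq> set ys" using assms(2) by simp
  then show ?thesis using \<open>set ys \<subseteq> W\<close> by blast
qed

lemma bset_subset: "ys \<in> sperms W (2 * r) \<Longrightarrow> bset ys r \<subseteq> W"
  unfolding bset_def using sperms_pair_subset by blast

lemma admissible_Cons_Cons: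
  assumes "finite V" "(a, b) \<in> distinct_pairs V" "ys \<in> sperms (V - {a, b}) (2 * r)" "1 \<le> k"
  shows "admissible V k (Suc r) (a # b # ys)
       = insert a ` admissible (V - {a, b}) (k - 1) r ys \<union> insert b ` admissible (V - {a, b}) (k - 1) r ys"
    (is "?L = insert a ` ?A \<union> insert b ` ?A")
proof -
  let ?P = "\<lambda>i. {ys ! (2 * i), ys ! (2 * i + 1)}"
  have P: "?P i \<subseteq> V - {a, b}" if "i < r" for i
    using sperms_pair_subset[OF assms(3) that] .
  have ab: "a \<in> V" "b \<in> V" "a \<noteq> b" using assms(2) by (auto simp: distinct_pairs_def)
  have L: "R \<in> ?L \<longleftrightarrow> R \<in> ksubsets V k \<and> card (R \<inter> {a, b}) = 1 \<and> (\<forall>i<r. card (R \<inter> ?P i) = 1)" for R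
    by (simp add: admissible_def All_less_Suc2)
  show ?thesis
  proof (intro equalityI subsetI)
    fix R assume "R \<in> ?L"
    then have R: "R \<in> ksubsets V k" "card (R \<inter> {a, b}) = 1" "\<forall>i<r. card (R \<inter> ?P i) = 1"
      using L by auto
    obtain c where c: "R \<inter> {a, b} = {c}" using R(2) by (rule card_1_singletonE)
    have "R - {c} \<in> ?A"
    proof -
      have "(R - {c}) \<inter> ?P i = R \<inter> ?P i" if "i < r" for i using P[OF that] c by auto
      moreover have "R - {c} \<subseteq> V - {a, b}" "card (R - {c}) = k - 1"
        using ksubsetsD[OF assms(1) R(1)] c by (auto simp: card_Diff_singleton_if)
      ultimately show ?thesis using R(3) by (simp add: admissible_def ksubsets_def)
    qed
    moreover have "R = insert c (R - {c})" "c = a \<or> c = b" using c by auto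
    ultimately show "R \<in> insert a ` ?A \<union> insert b ` ?A" by blast
  next
    fix R assume "R \<in> insert a ` ?A \<union> insert b ` ?A"
    then obtain c S where cS: "c = a \<or> c = b" "R = insert c S" "S \<in> ?A" by blast
    then have S: "S \<subseteq> V - {a, b}" "card S = k - 1" "\<forall>i<r. card (S \<inter> ?P i) = 1"
      by (auto simp: admissible_def ksubsets_def)
    have "finite S" using S(1) assms(1) finite_subset by blast
    moreover have "c \<notin> S" "c \<in> V" using cS S(1) ab by auto
    ultimately have "R \<in> ksubsets V k" using cS(2) S(1,2) assms(4) by (auto simp: ksubsets_def)
    moreover have "R \<inter> {a, b} = {c}" using cS S(1) ab by auto
    moreover have "R \<inter> ?P i = S \<inter> ?P i" if "i < r" for i using P[OF that] cS by auto
    ultimately show "R \<in> ?L" using L S(3) by simp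
  qed
qed

lemma finite_admissible: "finite V \<Longrightarrow> finite (admissible V k r xs)"
  unfolding admissible_def by (simp add: finite_ksubsets)

lemma avg_admissible_Cons_Cons:
  assumes "finite V" "(a, b) \<in> distinct_pairs V" "ys \<in> sperms (V - {a, b}) (2 * r)" "1 \<le> k"
  shows "avg (admissible V k (Suc r) (a # b # ys)) F
       = (avg (admissible (V - {a, b}) (k - 1) r ys) (\<lambda>S. F (insert a S))
          + avg (admissible (V - {a, b}) (k - 1) r ys) (\<lambda>S. F (insert b S))) / 2"
proof -
  let ?A = "admissible (V - {a, b}) (k - 1) r ys"
  have A: "S \<subseteq> V - {a, b}" if "S \<in> ?A" for S
    using that by (auto simp: admissible_def ksubsets_def)
  have inj: "inj_on (insert c) ?A" if "c \<in> {a, b}" for c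
  proof (rule inj_onI)
    fix S S' assume "S \<in> ?A" "S' \<in> ?A" "insert c S = insert c S'"
    moreover have "c \<notin> S" "c \<notin> S'" using A \<open>S \<in> ?A\<close> \<open>S' \<in> ?A\<close> that by auto
    ultimately show "S = S'" by (simp add: insert_ident)
  qed
  have "insert a S \<noteq> insert b S'" if "S' \<in> ?A" for S S'
    using A[OF that] assms(2) by (auto simp: distinct_pairs_def)
  then have disj: "insert a ` ?A \<inter> insert b ` ?A = {}" by blast
  have fin: "finite ?A" using assms(1) by (rule finite_admissible[OF finite_Diff])
  show ?thesis
    unfolding admissible_Cons_Cons[OF assms] avg_Un_images[OF fin inj[OF insertI1] inj[OF insertI2[OF singletonI]] disj]
    by (simp add: comp_def)
qed

lemma level_deriv_Suc:
  assumes "finite V" "(a, b) \<in> distinct_pairs V" "ys \<in> sperms (V - {a, b}) (2 * r)" "1 \<le> k"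
  shows "level_deriv V k (Suc r) (a # b # ys) f = level_deriv (V - {a, b}) (k - 1) r ys (pair_diff a b f)"
proof -
  let ?A = "admissible (V - {a, b}) (k - 1) r ys"
  let ?B = "bset ys r"
  let ?s = "\<lambda>S. (-1::real) ^ card (S \<inter> ?B)"
  have B: "?B \<subseteq> V - {a, b}" using assms(3) by (rule bset_subset)
  have S: "S \<subseteq> V - {a, b}" "finite S" if "S \<in> ?A" for S
    using that assms(1) finite_subset by (auto simp: admissible_def ksubsets_def)
  have sign_a: "(-1) ^ card (insert a S \<inter> bset (a # b # ys) (Suc r)) = ?s S" if "S \<in> ?A" for S
  proof -
    have "insert a S \<inter> insert b ?B = S \<inter> ?B" using B S(1)[OF that] assms(2) by (auto simp: distinct_pairs_def)
    then show ?thesis by (simp add: bset_Cons_Cons)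
  qed
  have sign_b: "(-1) ^ card (insert b S \<inter> bset (a # b # ys) (Suc r)) = - ?s S" if "S \<in> ?A" for S
  proof -
    have "insert b S \<inter> insert b ?B = insert b (S \<inter> ?B)" "b \<notin> S \<inter> ?B" "finite (S \<inter> ?B)"
      using S[OF that] by auto
    then show ?thesis by (simp add: bset_Cons_Cons)
  qed
  have "level_deriv V k (Suc r) (a # b # ys) f
      = (avg ?A (\<lambda>S. ?s S * f (insert a S)) - avg ?A (\<lambda>S. ?s S * f (insert b S))) / 2"
    unfolding level_deriv_def avg_admissible_Cons_Cons[OF assms]
    by (simp add: sign_a sign_b avg_uminus cong: avg_cong)
  also have "\<dots> = level_deriv (V - {a, b}) (k - 1) r ys (pair_diff a b f)"
    unfolding avg_half_diff level_deriv_def pair_diff_def by (simp add: right_diff_distrib)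
  finally show ?thesis .
qed

lemma level_weight_sq_Suc:
  assumes "finite V" "1 \<le> k"
  shows "level_weight_sq V k (Suc r) f
       = avg (distinct_pairs V) (\<lambda>(a, b). level_weight_sq (V - {a, b}) (k - 1) r (pair_diff a b f))"
proof -
  let ?B = "\<lambda>(a, b). sperms (V - {a, b}) (2 * r)"
  let ?cons = "\<lambda>((a, b), ys). a # b # ys"
  let ?D = "\<lambda>xs. (level_deriv V k (Suc r) xs f)\<^sup>2"
  have inj: "inj_on ?cons (Sigma (distinct_pairs V) ?B)" by (auto simp: inj_on_def)
  have fibers: "finite (?B p) \<and> card (?B p) = card (sperms (V - {a0, b0}) (2 * r))"
    if "p \<in> distinct_pairs V" "(a0, b0) \<in> distinct_pairs V" for p a0 b0
    using that assms(1) by (cases p) (auto simp: finite_sperms card_sperms card_remove_distinct_pair)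
  show ?thesis
  proof (cases "distinct_pairs V = {}")
    case False
    then obtain a0 b0 where "(a0, b0) \<in> distinct_pairs V" by auto
    have "level_weight_sq V k (Suc r) f = avg (?cons ` Sigma (distinct_pairs V) ?B) ?D"
      unfolding level_weight_sq_def sperms_Suc_eq_image ..
    also have "\<dots> = avg (distinct_pairs V) (\<lambda>p. avg (?B p) (\<lambda>ys. ?D (?cons (p, ys))))"
      using avg_reindex[OF inj] avg_Sigma[OF finite_distinct_pairs[OF assms(1)] fibers]
        \<open>(a0, b0) \<in> distinct_pairs V\<close> by (simp add: comp_def)
    also have "\<dots> = avg (distinct_pairs V) (\<lambda>(a, b). level_weight_sq (V - {a, b}) (k - 1) r (pair_diff a b f))"
      using assms by (auto simp: level_weight_sq_def level_deriv_Suc intro!: avg_cong)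
    finally show ?thesis .
  qed (unfold level_weight_sq_def sperms_Suc_eq_image, simp add: avg_def)
qed

subsection \<open>Functions of low degree\<close>

text \<open>Functions of degree below \<open>j\<close>: the orthogonal complement of \<^const>\<open>orth_low_deg\<close>, i.e. the
  span of the indicators \<open>R \<mapsto> [T \<subseteq> R]\<close> with \<open>|T| < j\<close>.\<close>
definition low_deg :: "'a set \<Rightarrow> nat \<Rightarrow> nat \<Rightarrow> ('a set \<Rightarrow> real) \<Rightarrow> bool" where
  "low_deg V k j g \<longleftrightarrow> (\<forall>x. orth_low_deg V k j x \<longrightarrow> inner_on (ksubsets V k) x g = 0)"

definition superset_indicators :: "'a set \<Rightarrow> nat \<Rightarrow> ('a set \<Rightarrow> real) set" where
  "superset_indicators V j = (\<lambda>T R. if T \<subseteq> R then 1 else 0) ` {T. T \<subseteq> V \<and> card T < j}"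

lemma sum_supersets_eq_inner_on:
  "finite X \<Longrightarrow> (\<Sum>R\<in>{R\<in>X. T \<subseteq> R}. h R) = inner_on X (\<lambda>R. if T \<subseteq> R then 1 else 0) h"
  by (auto simp: inner_on_def sum.inter_filter intro!: sum.cong)

lemma orth_low_deg_iff_superset_indicators:
  assumes "finite V"
  shows "orth_low_deg V k j x \<longleftrightarrow> (\<forall>b\<in>superset_indicators V j. inner_on (ksubsets V k) x b = 0)"
  using assms by (auto simp: orth_low_deg_def superset_indicators_def sum_supersets_eq_inner_on
      finite_ksubsets inner_on_commute)

lemma orthogonal_decomposition:
  assumes "finite V"
  shows "\<exists>g. low_deg V k j g \<and> orth_low_deg V k j (\<lambda>R. f R - g R)"
proof -
  have "finite (superset_indicators V j)"
    using assms unfolding superset_indicators_def by (auto intro: finite_subset[of _ "Pow V"])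
  then show ?thesis
    using orth_proj_on_exists[where X="ksubsets V k" and f=f]
    by (simp add: orth_proj_on_def low_deg_def orth_low_deg_iff_superset_indicators[OF assms])
qed

lemma low_deg_mono: "low_deg V k j g \<Longrightarrow> j \<le> j' \<Longrightarrow> low_deg V k j' g"
  unfolding low_deg_def using orth_low_deg_mono by blast

lemma low_deg_0:
  assumes "finite V" "low_deg V k 0 g" "R \<in> ksubsets V k"
  shows "g R = 0"
proof -
  have "orth_low_deg V k 0 g" by (simp add: orth_low_deg_def)
  then have "inner_on (ksubsets V k) g g = 0" using assms(2) by (simp add: low_deg_def)
  then show ?thesis using inner_on_self_eq_0[OF finite_ksubsets[OF assms(1)]] assms(3) by blast
qed

lemma orth_low_deg_top:
  assumes "finite V" "orth_low_deg V k (Suc k) h" "R \<in> ksubsets V k"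
  shows "h R = 0"
proof -
  have "R' = R" if "R' \<in> ksubsets V k" "R \<subseteq> R'" for R'
    using ksubsetsD[OF assms(1) that(1)] ksubsetsD[OF assms(1,3)] that(2) card_subset_eq by metis
  then have "{R'\<in>ksubsets V k. R \<subseteq> R'} = {R}" using assms(3) by blast
  moreover have "(\<Sum>R'\<in>{R'\<in>ksubsets V k. R \<subseteq> R'}. h R') = 0"
    using assms(2) ksubsetsD[OF assms(1,3)] by (simp add: orth_low_deg_def)
  ultimately show ?thesis by simp
qed

definition pair_diff_adjoint :: "'a \<Rightarrow> 'a \<Rightarrow> ('a set \<Rightarrow> real) \<Rightarrow> 'a set \<Rightarrow> real" where
  "pair_diff_adjoint a b x R =
     (if a \<in> R \<and> b \<notin> R then x (R - {a}) else 0) - (if b \<in> R \<and> a \<notin> R then x (R - {b}) else 0)"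

lemma inner_on_pair_diff:
  assumes "finite V" "(a, b) \<in> distinct_pairs V" "1 \<le> k"
  shows "inner_on (ksubsets (V - {a, b}) (k - 1)) x (pair_diff a b g)
       = inner_on (ksubsets V k) (pair_diff_adjoint a b x) g / 2"
proof -
  let ?K' = "ksubsets (V - {a, b}) (k - 1)"
  have ab: "a \<in> V" "b \<in> V" "a \<noteq> b" using assms(2) by (auto simp: distinct_pairs_def)
  have lift: "(\<Sum>S\<in>?K'. x S * g (insert c S))
      = (\<Sum>R\<in>ksubsets V k. if c \<in> R \<and> d \<notin> R then x (R - {c}) * g R else 0)"
    if "{c, d} = {a, b}" "c \<in> V" "c \<noteq> d" for c d
  proof -
    have K': "?K' = ksubsets (V - {c, d}) (k - 1)" using that(1) by simp
    have "insert c S - {c} = S" if "S \<in> ksubsets (V - {c, d}) (k - 1)" for S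
      using that by (auto simp: ksubsets_def)
    then have "(\<Sum>S\<in>?K'. x S * g (insert c S)) = (\<Sum>S\<in>ksubsets (V - {c, d}) (k - 1). x (insert c S - {c}) * g (insert c S))"
      by (intro sum.cong[OF K']) simp
    also have "\<dots> = (\<Sum>R\<in>ksubsets V k. if c \<in> R \<and> d \<notin> R then x (R - {c}) * g R else 0)"
      by (rule sum_ksubsets_remove_pair_insert[OF assms(1) that(2,3) assms(3)])
    finally show ?thesis .
  qed
  have "inner_on ?K' x (pair_diff a b g) = ((\<Sum>S\<in>?K'. x S * g (insert a S)) - (\<Sum>S\<in>?K'. x S * g (insert b S))) / 2"
    unfolding inner_on_def pair_diff_def
    by (simp add: right_diff_distrib sum_subtractf flip: sum_divide_distrib)
  also have "\<dots> = inner_on (ksubsets V k) (pair_diff_adjoint a b x) g / 2"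
  proof -
    have "pair_diff_adjoint a b x R * g R = (if a \<in> R \<and> b \<notin> R then x (R - {a}) * g R else 0)
        - (if b \<in> R \<and> a \<notin> R then x (R - {b}) * g R else 0)" for R
      by (simp add: pair_diff_adjoint_def left_diff_distrib)
    then show ?thesis
      using lift[of a b] lift[of b a] ab by (simp add: insert_commute inner_on_def sum_subtractf)
  qed
  finally show ?thesis .
qed

lemma orth_low_deg_sum_supersets:
  assumes "finite W" "orth_low_deg W m j x" "card T < j \<or> \<not> T \<subseteq> W"
  shows "(\<Sum>S\<in>{S\<in>ksubsets W m. T \<subseteq> S}. x S) = 0"
proof (cases "T \<subseteq> W")
  case False
  then have "{S\<in>ksubsets W m. T \<subseteq> S} = {}" by (auto simp: ksubsets_def)
  then show ?thesis by (simp only: sum.empty)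
qed (use assms in \<open>auto simp: orth_low_deg_def\<close>)

lemma orth_low_deg_pair_diff:
  assumes "finite V" "(a, b) \<in> distinct_pairs V" "1 \<le> k" "orth_low_deg V k (Suc j) h"
  shows "orth_low_deg (V - {a, b}) (k - 1) j (pair_diff a b h)"
  unfolding orth_low_deg_def
proof (intro allI impI)
  fix T assume T: "T \<subseteq> V - {a, b} \<and> card T < j"
  let ?ind = "\<lambda>T R. if T \<subseteq> R then 1 else (0::real)"
  have "finite T" using T assms(1) finite_subset by blast
  have adj: "pair_diff_adjoint a b (?ind T) = (\<lambda>R. ?ind (insert a T) R - ?ind (insert b T) R)"
    using T by (auto simp: pair_diff_adjoint_def fun_eq_iff)
  have vanish: "inner_on (ksubsets V k) (?ind (insert c T)) h = 0" if "c \<in> {a, b}" for c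
  proof -
    have "insert c T \<subseteq> V" "card (insert c T) < Suc j"
      using T that assms(2) \<open>finite T\<close> by (auto simp: distinct_pairs_def card_insert_if)
    then have "(\<Sum>R\<in>{R\<in>ksubsets V k. insert c T \<subseteq> R}. h R) = 0"
      using assms(4) unfolding orth_low_deg_def by blast
    then show ?thesis by (simp only: sum_supersets_eq_inner_on[OF finite_ksubsets[OF assms(1)]])
  qed
  have "(\<Sum>S\<in>{S\<in>ksubsets (V - {a, b}) (k - 1). T \<subseteq> S}. pair_diff a b h S)
      = inner_on (ksubsets V k) (pair_diff_adjoint a b (?ind T)) h / 2"
    by (simp only: sum_supersets_eq_inner_on[OF finite_ksubsets[OF finite_Diff[OF assms(1)]]]
        inner_on_pair_diff[OF assms(1-3)])
  also have "\<dots> = 0"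
    using vanish[of a] vanish[of b] by (simp add: adj inner_on_diff_left)
  finally show "(\<Sum>S\<in>{S\<in>ksubsets (V - {a, b}) (k - 1). T \<subseteq> S}. pair_diff a b h S) = 0" .
qed

lemma orth_low_deg_pair_diff_adjoint:
  assumes "finite V" "(a, b) \<in> distinct_pairs V" "1 \<le> k" "orth_low_deg (V - {a, b}) (k - 1) j x"
  shows "orth_low_deg V k (Suc j) (pair_diff_adjoint a b x)"
  unfolding orth_low_deg_def
proof (intro allI impI)
  fix T assume T: "T \<subseteq> V \<and> card T < Suc j"
  let ?ind = "\<lambda>T R. if T \<subseteq> R then 1 else (0::real)"
  let ?K' = "ksubsets (V - {a, b}) (k - 1)"
  let ?\<sigma> = "\<lambda>T'. inner_on ?K' x (?ind T')"
  have "finite T" using T assms(1) finite_subset by blast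
  have diff: "pair_diff a b (?ind T) = (\<lambda>S. 1 / 2 * (?ind (T - {a}) S - ?ind (T - {b}) S))"
    by (auto simp: pair_diff_def fun_eq_iff)
  have vanish: "?\<sigma> (T - {d}) = 0" if "d \<in> {a, b}" "T \<inter> {a, b} \<noteq> {}" for d
  proof -
    have "card (T - {d}) < j \<or> \<not> T - {d} \<subseteq> V - {a, b}"
    proof (cases "d \<in> T")
      case True
      then have "0 < card T" using \<open>finite T\<close> card_gt_0_iff by blast
      moreover have "card T \<le> j" using T by simp
      ultimately have "card (T - {d}) < j" using True by (simp add: card_Diff_singleton)
      then show ?thesis ..
    qed (use that in auto)
    then show ?thesis
      using orth_low_deg_sum_supersets[OF finite_Diff[OF assms(1)] assms(4)]
      by (simp add: sum_supersets_eq_inner_on finite_ksubsets assms(1) inner_on_commute)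
  qed
  have "(\<Sum>R\<in>{R\<in>ksubsets V k. T \<subseteq> R}. pair_diff_adjoint a b x R)
      = 2 * inner_on ?K' x (pair_diff a b (?ind T))"
    unfolding inner_on_pair_diff[OF assms(1-3)] sum_supersets_eq_inner_on[OF finite_ksubsets[OF assms(1)]]
    by (simp add: inner_on_commute)
  also have "\<dots> = ?\<sigma> (T - {a}) - ?\<sigma> (T - {b})"
    unfolding diff inner_on_scale_right inner_on_diff_right by simp
  also have "\<dots> = 0"
    using vanish by (cases "T \<inter> {a, b} = {}") (auto simp: Diff_triv)
  finally show "(\<Sum>R\<in>{R\<in>ksubsets V k. T \<subseteq> R}. pair_diff_adjoint a b x R) = 0" .
qed

lemma low_deg_pair_diff:
  assumes "finite V" "(a, b) \<in> distinct_pairs V" "1 \<le> k" "low_deg V k (Suc j) g"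
  shows "low_deg (V - {a, b}) (k - 1) j (pair_diff a b g)"
  unfolding low_deg_def
proof (intro allI impI)
  fix x assume "orth_low_deg (V - {a, b}) (k - 1) j x"
  then have "orth_low_deg V k (Suc j) (pair_diff_adjoint a b x)"
    by (rule orth_low_deg_pair_diff_adjoint[OF assms(1-3)])
  then show "inner_on (ksubsets (V - {a, b}) (k - 1)) x (pair_diff a b g) = 0"
    using assms(4) unfolding inner_on_pair_diff[OF assms(1-3)] low_deg_def by simp
qed

lemma sperms_SucE:
  assumes "xs \<in> sperms V (2 * Suc r)"
  obtains a b ys where "xs = a # b # ys" "(a, b) \<in> distinct_pairs V" "ys \<in> sperms (V - {a, b}) (2 * r)"
  using assms unfolding sperms_Suc_eq_image by auto

lemma level_deriv_Nil: "level_deriv V k 0 [] f = avg (ksubsets V k) f"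
  by (simp add: level_deriv_def admissible_def bset_def)

lemma level_deriv_eq_0_if_orth_low_deg:
  assumes "finite V" "r \<le> k" "xs \<in> sperms V (2 * r)" "orth_low_deg V k (Suc r) h"
  shows "level_deriv V k r xs h = 0"
  using assms
proof (induction r arbitrary: V k xs h)
  case 0
  then have "xs = []" by (simp add: sperms_def)
  moreover have "(\<Sum>R\<in>{R\<in>ksubsets V k. {} \<subseteq> R}. h R) = 0"
    using "0.prems"(4) unfolding orth_low_deg_def by auto
  ultimately show ?case by (simp add: level_deriv_Nil avg_def)
next
  case (Suc r)
  obtain a b ys where xs: "xs = a # b # ys" "(a, b) \<in> distinct_pairs V" "ys \<in> sperms (V - {a, b}) (2 * r)"
    using Suc.prems(3) by (rule sperms_SucE)
  have "1 \<le> k" using Suc.prems(2) by simp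
  then show ?case
    using Suc.IH[OF _ _ xs(3) orth_low_deg_pair_diff[OF Suc.prems(1) xs(2) _ Suc.prems(4)]] Suc.prems(1,2)
    by (simp add: xs(1) level_deriv_Suc[OF Suc.prems(1) xs(2,3)])
qed

lemma level_deriv_eq_0_if_low_deg:
  assumes "finite V" "r \<le> k" "j \<le> r" "xs \<in> sperms V (2 * r)" "low_deg V k j g"
  shows "level_deriv V k r xs g = 0"
  using assms
proof (induction r arbitrary: V k xs g j)
  case 0
  then have "xs = []" "low_deg V k 0 g" by (simp_all add: sperms_def)
  then have "\<forall>R\<in>ksubsets V k. g R = 0" using low_deg_0[OF "0.prems"(1)] by blast
  then show ?case using \<open>xs = []\<close> by (simp add: level_deriv_Nil avg_def)
next
  case (Suc r)
  obtain a b ys where xs: "xs = a # b # ys" "(a, b) \<in> distinct_pairs V" "ys \<in> sperms (V - {a, b}) (2 * r)"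
    using Suc.prems(4) by (rule sperms_SucE)
  have "1 \<le> k" using Suc.prems(2) by simp
  have "low_deg V k (Suc r) g" using low_deg_mono Suc.prems(3,5) by blast
  then show ?case
    using Suc.IH[where j=r, OF _ _ _ xs(3) low_deg_pair_diff[OF Suc.prems(1) xs(2) \<open>1 \<le> k\<close>]] Suc.prems(1,2)
    by (simp add: xs(1) level_deriv_Suc[OF Suc.prems(1) xs(2,3) \<open>1 \<le> k\<close>])
qed

lemma level_deriv_add: "level_deriv V k r xs (\<lambda>R. g R + h R) = level_deriv V k r xs g + level_deriv V k r xs h"
  by (simp add: level_deriv_def avg_def algebra_simps sum.distrib add_divide_distrib)

lemma level_weight_sq_add_if_level_deriv_0:
  assumes "\<And>xs. xs \<in> sperms V (2 * r) \<Longrightarrow> level_deriv V k r xs g = 0"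
  shows "level_weight_sq V k r (\<lambda>R. g R + h R) = level_weight_sq V k r h"
  using assms by (simp add: level_weight_sq_def level_deriv_add cong: avg_cong)

lemma level_weight_low_deg:
  assumes "finite V" "r \<le> k" "j \<le> r" "low_deg V k j g"
  shows "level_weight V k r g = 0"
  using level_deriv_eq_0_if_low_deg[OF assms(1-3) _ assms(4)]
  by (simp add: level_weight_eq_sqrt level_weight_sq_def avg_def)

lemma level_weight_sq_diff_low_deg:
  assumes "finite V" "r \<le> k" "j \<le> r" "low_deg V k j g"
  shows "level_weight_sq V k r (\<lambda>R. f R - g R) = level_weight_sq V k r f"
  using level_weight_sq_add_if_level_deriv_0[where g=g and h="\<lambda>R. f R - g R"]
    level_deriv_eq_0_if_low_deg[OF assms(1-3) _ assms(4)]
  by simp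

subsection \<open>Bounding a function by its level weights\<close>

lemma low_deg_1_const:
  assumes "finite V" "low_deg V k 1 v" "R \<in> ksubsets V k"
  shows "v R = avg (ksubsets V k) v"
proof -
  let ?K = "ksubsets V k"
  define x where "x = (\<lambda>R. v R - avg ?K v)"
  have "sum x ?K = 0"
    by (simp add: x_def sum_subtractf sum_eq_card_mult_avg[of v ?K])
  then have "orth_low_deg V k 1 x"
    using assms(1) by (auto simp: orth_low_deg_def card_eq_0_iff dest: finite_subset)
  then have "inner_on ?K x v = 0" using assms(2) by (simp add: low_deg_def)
  moreover have "inner_on ?K x (\<lambda>_. avg ?K v) = 0"
    using \<open>sum x ?K = 0\<close> by (simp add: inner_on_def sum_distrib_right[symmetric])
  ultimately have "inner_on ?K x x = 0" by (simp add: x_def inner_on_diff_right)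
  then have "x R = 0" by (rule inner_on_self_eq_0[OF finite_ksubsets[OF assms(1)] _ assms(3)])
  then show ?thesis by (simp add: x_def)
qed

lemma avg_sq_le_level_weight_sq_0:
  assumes "finite V" "low_deg V k 1 v"
  shows "avg (ksubsets V k) (\<lambda>R. (v R)\<^sup>2) \<le> level_weight_sq V k 0 v"
proof -
  let ?K = "ksubsets V k"
  have "avg ?K (\<lambda>R. (v R)\<^sup>2) = avg ?K (\<lambda>R. (avg ?K v)\<^sup>2)"
    using low_deg_1_const[OF assms] by (simp cong: avg_cong)
  also have "\<dots> \<le> (avg ?K v)\<^sup>2" by (simp add: avg_def)
  also have "\<dots> = level_weight_sq V k 0 v"
    by (simp add: level_weight_sq_def sperms_def avg_def level_deriv_Nil)
  finally show ?thesis .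
qed

text \<open>Poincare's inequality bounds \<open>v\<close> by its pair differences, which the hypothesis bounds by
  their level weights of one level less; these average to the level weight of \<open>v\<close> by
  \<open>level_weight_sq_Suc\<close>.\<close>
lemma avg_sq_le_level_weight_sq_Suc:
  assumes "finite V" "Suc l \<le> k" "2 * k \<le> card V" "orth_low_deg V k (Suc l) v"
    and pairs: "\<And>a b. (a, b) \<in> distinct_pairs V \<Longrightarrow>
      avg (ksubsets (V - {a, b}) (k - 1)) (\<lambda>S. (pair_diff a b v S)\<^sup>2)
        \<le> 2 ^ l * real ((k - 1) choose l) * level_weight_sq (V - {a, b}) (k - 1) l (pair_diff a b v)"
  shows "avg (ksubsets V k) (\<lambda>R. (v R)\<^sup>2) \<le> 2 ^ Suc l * real (k choose Suc l) * level_weight_sq V k (Suc l) v"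
proof -
  define N where "N = real (card V)"
  define A where "A = avg (ksubsets V k) (\<lambda>R. (v R)\<^sup>2)"
  define W where "W = level_weight_sq V k (Suc l) v"
  define B where "B = 2 ^ l * real ((k - 1) choose l)"
  define X where "X = 2 ^ Suc l * real (k choose Suc l) * W"
  have "1 \<le> k" "k < card V" using assms(2,3) by auto
  have "real (Suc l) * (N - real l) / 2 * A
      \<le> real k * (N - real k) * avg (distinct_pairs V)
           (\<lambda>(a, b). avg (ksubsets (V - {a, b}) (k - 1)) (\<lambda>S. (pair_diff a b v S)\<^sup>2))"
    using poincare[OF assms(1) _ assms(2,3,4)] by (simp add: N_def A_def)
  also have "\<dots> \<le> real k * (N - real k) * (B * W)"
    using pairs \<open>k < card V\<close> unfolding W_def B_def level_weight_sq_Suc[OF assms(1) \<open>1 \<le> k\<close>]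
    by (intro mult_left_mono) (auto simp: N_def avg_const_mult[symmetric] intro!: avg_mono)
  also have "\<dots> = real (Suc l) * ((N - real k) * X) / 2"
  proof -
    have "real k * real ((k - 1) choose l) = real (Suc l) * real (k choose Suc l)"
      by (simp only: of_nat_mult[symmetric] binomial_absorption)
    then show ?thesis by (simp add: B_def X_def algebra_simps)
  qed
  finally have "(N - real l) * A \<le> (N - real k) * X"
    by (simp add: mult.assoc)
  moreover have "(N - real k) * A \<le> (N - real l) * A"
    using assms(2) by (intro mult_right_mono) (auto simp: A_def intro!: avg_nonneg)
  ultimately have "(N - real k) * A \<le> (N - real k) * X" by linarith
  moreover have "0 < N - real k" using \<open>k < card V\<close> by (simp add: N_def)
  ultimately show ?thesis by (simp add: A_def X_def W_def)
qed

lemma avg_sq_le_level_weight_sq: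
  assumes "finite V" "l \<le> k" "2 * k \<le> card V" "orth_low_deg V k l v" "low_deg V k (Suc l) v"
  shows "avg (ksubsets V k) (\<lambda>R. (v R)\<^sup>2) \<le> 2 ^ l * real (k choose l) * level_weight_sq V k l v"
  using assms
proof (induction l arbitrary: V k v)
  case 0
  then show ?case using avg_sq_le_level_weight_sq_0 by simp
next
  case (Suc l)
  have "1 \<le> k" using Suc.prems(2) by simp
  show ?case
  proof (rule avg_sq_le_level_weight_sq_Suc[OF Suc.prems(1-4)])
    fix a b assume p: "(a, b) \<in> distinct_pairs V"
    show "avg (ksubsets (V - {a, b}) (k - 1)) (\<lambda>S. (pair_diff a b v S)\<^sup>2)
        \<le> 2 ^ l * real ((k - 1) choose l) * level_weight_sq (V - {a, b}) (k - 1) l (pair_diff a b v)"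
    proof (rule Suc.IH)
      show "2 * (k - 1) \<le> card (V - {a, b})"
        using card_remove_distinct_pair[OF Suc.prems(1) p] Suc.prems(3) by simp
    qed (use Suc.prems orth_low_deg_pair_diff[OF Suc.prems(1) p \<open>1 \<le> k\<close>]
        low_deg_pair_diff[OF Suc.prems(1) p \<open>1 \<le> k\<close>] in auto)
  qed
qed

lemma avg_sq_add_orthogonal:
  assumes "inner_on X u w = 0"
  shows "avg X (\<lambda>R. (u R + w R)\<^sup>2) = avg X (\<lambda>R. (u R)\<^sup>2) + avg X (\<lambda>R. (w R)\<^sup>2)"
proof -
  have "(\<Sum>R\<in>X. (u R + w R)\<^sup>2) = (\<Sum>R\<in>X. (u R)\<^sup>2) + (\<Sum>R\<in>X. (w R)\<^sup>2) + 2 * inner_on X u w"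
    by (simp add: inner_on_def power2_sum sum.distrib sum_distrib_left mult.assoc)
  then show ?thesis using assms by (simp add: avg_def add_divide_distrib)
qed

text \<open>Split \<open>h\<close> into its component \<open>v\<close> of degree \<open>n\<close> and the rest \<open>h'\<close>: the derivatives of
  level \<open>n\<close> do not see \<open>h'\<close>, those of higher level do not see \<open>v\<close>, and \<open>v \<perp> h'\<close>.\<close>
lemma avg_sq_le_sum_level_weight_sq:
  assumes "finite V" "2 * k \<le> card V" "l \<le> Suc k" "orth_low_deg V k l h"
  shows "avg (ksubsets V k) (\<lambda>R. (h R)\<^sup>2) \<le> (\<Sum>r=l..k. 2 ^ r * real (k choose r) * level_weight_sq V k r h)"
  using assms(3,4)
proof (induction l arbitrary: h rule: inc_induct)
  case base
  then have "\<forall>R\<in>ksubsets V k. h R = 0" using orth_low_deg_top[OF assms(1)] by blast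
  then show ?case by (simp add: avg_def)
next
  case (step n)
  obtain v where v: "low_deg V k (Suc n) v" and "orth_low_deg V k (Suc n) (\<lambda>R. h R - v R)"
    using orthogonal_decomposition[OF assms(1)] by blast
  define h' where "h' = (\<lambda>R. h R - v R)"
  have h': "orth_low_deg V k (Suc n) h'"
    using \<open>orth_low_deg V k (Suc n) (\<lambda>R. h R - v R)\<close> by (simp add: h'_def)
  have h_eq: "h = (\<lambda>R. v R + h' R)" by (simp add: h'_def)
  have "orth_low_deg V k n (\<lambda>R. h R - h' R)"
    using orth_low_deg_diff[OF step.prems orth_low_deg_mono[OF h']] by simp
  then have "orth_low_deg V k n v" by (simp add: h'_def)
  then have "avg (ksubsets V k) (\<lambda>R. (v R)\<^sup>2) \<le> 2 ^ n * real (k choose n) * level_weight_sq V k n h"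
    using avg_sq_le_level_weight_sq[OF assms(1) _ assms(2) _ v] step.hyps
      level_weight_sq_add_if_level_deriv_0[of V n k h' v] level_deriv_eq_0_if_orth_low_deg[OF assms(1) _ _ h']
    by (simp add: h_eq add.commute)
  moreover have "avg (ksubsets V k) (\<lambda>R. (h' R)\<^sup>2) \<le> (\<Sum>r=Suc n..k. 2 ^ r * real (k choose r) * level_weight_sq V k r h)"
  proof -
    have "level_weight_sq V k r h' = level_weight_sq V k r h" if "Suc n \<le> r" "r \<le> k" for r
      unfolding h_eq using level_deriv_eq_0_if_low_deg[OF assms(1) that(2,1) _ v]
      by (intro level_weight_sq_add_if_level_deriv_0[symmetric])
    then show ?thesis using step.IH[OF h'] by simp
  qed
  moreover have "inner_on (ksubsets V k) v h' = 0"
    using v h' by (simp add: low_deg_def inner_on_commute)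
  moreover have "{n..k} = insert n {Suc n..k}" using step.hyps by auto
  ultimately show ?case by (simp add: h_eq avg_sq_add_orthogonal)
qed

lemma sum_binomial_weights_le: "(\<Sum>r=l..k. 2 ^ r * real (k choose r)) \<le> 3 ^ k"
proof -
  have "(\<Sum>r=l..k. 2 ^ r * real (k choose r)) \<le> (\<Sum>r\<le>k. 2 ^ r * real (k choose r))"
    by (intro sum_mono2) auto
  also have "\<dots> = 3 ^ k"
    using binomial_ring[of "2 :: real" 1 k] by (simp add: mult.commute)
  finally show ?thesis .
qed

lemma avg_sq_le_if_level_weight_sq_le:
  assumes "finite V" "2 * k \<le> card V" "l \<le> k" "orth_low_deg V k l h"
    and "\<And>r. l \<le> r \<Longrightarrow> r \<le> k \<Longrightarrow> level_weight_sq V k r h \<le> \<delta>"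
  shows "avg (ksubsets V k) (\<lambda>R. (h R)\<^sup>2) \<le> 3 ^ k * \<delta>"
proof -
  have "0 \<le> \<delta>" using assms(5)[OF order_refl assms(3)] level_weight_sq_nonneg order_trans by blast
  have "avg (ksubsets V k) (\<lambda>R. (h R)\<^sup>2) \<le> (\<Sum>r=l..k. 2 ^ r * real (k choose r) * level_weight_sq V k r h)"
    using assms(3) by (intro avg_sq_le_sum_level_weight_sq[OF assms(1,2) _ assms(4)]) simp
  also have "\<dots> \<le> (\<Sum>r=l..k. 2 ^ r * real (k choose r)) * \<delta>"
    unfolding sum_distrib_right by (intro sum_mono mult_left_mono assms(5)) auto
  also have "\<dots> \<le> 3 ^ k * \<delta>"
    using \<open>0 \<le> \<delta>\<close> by (intro mult_right_mono sum_binomial_weights_le)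
  finally show ?thesis .
qed

lemma card_large_values_le:
  assumes "finite X" "0 \<le> t"
  shows "real (card {R\<in>X. t < \<bar>h R\<bar>}) * t\<^sup>2 \<le> real (card X) * avg X (\<lambda>R. (h R)\<^sup>2)"
proof -
  let ?L = "{R\<in>X. t < \<bar>h R\<bar>}"
  have "t\<^sup>2 \<le> (h R)\<^sup>2" if "R \<in> ?L" for R
    using power_mono[of t "\<bar>h R\<bar>" 2] that assms(2) by simp
  then have "real (card ?L) * t\<^sup>2 \<le> (\<Sum>R\<in>?L. (h R)\<^sup>2)"
    using sum_mono[of ?L "\<lambda>_. t\<^sup>2" "\<lambda>R. (h R)\<^sup>2"] by simp
  also have "\<dots> \<le> (\<Sum>R\<in>X. (h R)\<^sup>2)" by (rule sum_mono2) (use assms in auto)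
  finally show ?thesis by (simp add: sum_eq_card_mult_avg)
qed

lemma min_le_five_powr_sqrt:
  assumes "0 < \<epsilon>"
  shows "min 1 (3 ^ k * \<epsilon>) \<le> 5 powr (real k / 2) * sqrt \<epsilon>"
proof -
  define q where "q = 5 powr (real k / 2)"
  define s where "s = sqrt \<epsilon>"
  have "q * q = 5 ^ k" by (simp add: q_def powr_add[symmetric] powr_realpow)
  have "0 < q" "0 < s" "s * s = \<epsilon>" using assms by (simp_all add: q_def s_def)
  show ?thesis
  proof (cases "1 \<le> q * s")
    case False
    have "3 ^ k * s * q \<le> 3 ^ k"
      using False mult_left_le[of "s * q" "3 ^ k"] by (simp add: mult.assoc mult.commute)
    also have "\<dots> \<le> 5 ^ k" by (rule power_mono) simp_all
    finally have "3 ^ k * s * q \<le> 5 ^ k" .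
    then have "3 ^ k * s * q \<le> q * q" using \<open>q * q = 5 ^ k\<close> by simp
    then have "3 ^ k * s \<le> q" using \<open>0 < q\<close> by (rule mult_right_le_imp_le)
    then have "3 ^ k * s * s \<le> q * s" using \<open>0 < s\<close> by (simp add: mult_right_mono)
    then have "3 ^ k * \<epsilon> \<le> q * s" using \<open>s * s = \<epsilon>\<close> by (simp add: mult.assoc)
    then show ?thesis by (simp add: q_def s_def)
  qed (simp add: q_def s_def)
qed

lemma card_large_deviations_le:
  assumes "finite V" "0 < \<epsilon>" "avg (ksubsets V k) (\<lambda>R. (h R)\<^sup>2) \<le> 3 ^ k * \<epsilon>\<^sup>2"
  shows "real (card {R\<in>ksubsets V k. sqrt \<epsilon> < \<bar>h R\<bar>})
       \<le> 5 powr (real k / 2) * sqrt \<epsilon> * real (card V choose k)"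
proof -
  let ?c = "real (card {R\<in>ksubsets V k. sqrt \<epsilon> < \<bar>h R\<bar>})"
  let ?N = "real (card V choose k)"
  have "?c \<le> ?N"
    using card_mono[OF finite_ksubsets[OF assms(1)], of "{R\<in>ksubsets V k. sqrt \<epsilon> < \<bar>h R\<bar>}"]
    by (simp add: card_ksubsets[OF assms(1)])
  moreover have "?c * \<epsilon> \<le> ?N * (3 ^ k * \<epsilon>\<^sup>2)"
  proof -
    have "?c * \<epsilon> \<le> ?N * avg (ksubsets V k) (\<lambda>R. (h R)\<^sup>2)"
      using card_large_values_le[OF finite_ksubsets[OF assms(1), of k], where t="sqrt \<epsilon>" and h=h]
        assms(2) by (simp add: card_ksubsets[OF assms(1)])
    also have "\<dots> \<le> ?N * (3 ^ k * \<epsilon>\<^sup>2)" using assms(3) by (rule mult_left_mono) simp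
    finally show ?thesis .
  qed
  then have "?c \<le> 3 ^ k * \<epsilon> * ?N"
    using assms(2) by (simp add: power2_eq_square algebra_simps)
  ultimately have "?c \<le> min 1 (3 ^ k * \<epsilon>) * ?N" by (simp add: min_def)
  also have "\<dots> \<le> 5 powr (real k / 2) * sqrt \<epsilon> * ?N"
    by (intro mult_right_mono min_le_five_powr_sqrt assms(2)) simp
  finally show ?thesis .
qed

theorem proposition2p6:
  fixes V :: "'a set" and k l :: nat and \<epsilon> :: real and f :: "'a set \<Rightarrow> real"
  assumes "finite V" and "card V \<ge> 2*k" and "k \<ge> l" and "\<epsilon> > 0"
    and "\<forall>r. l \<le> r \<and> r \<le> k \<longrightarrow> level_weight V k r f \<le> \<epsilon>"
  shows "\<exists>g :: 'a set \<Rightarrow> real.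
           real (card {R \<in> ksubsets V k. \<bar>f R - g R\<bar> > sqrt \<epsilon>})
             \<le> 5 powr (real k / 2) * sqrt \<epsilon> * real (card V choose k)
         \<and> (\<forall>r. l \<le> r \<and> r \<le> k \<longrightarrow> level_weight V k r g = 0)"
proof -
  obtain g where g: "low_deg V k l g" and h: "orth_low_deg V k l (\<lambda>R. f R - g R)"
    using orthogonal_decomposition[OF assms(1)] by blast
  have "level_weight_sq V k r (\<lambda>R. f R - g R) \<le> \<epsilon>\<^sup>2" if "l \<le> r" "r \<le> k" for r
    using assms(5) that sqrt_le_D
    by (simp add: level_weight_eq_sqrt level_weight_sq_diff_low_deg[OF assms(1) that(2,1) g])
  then have "avg (ksubsets V k) (\<lambda>R. (f R - g R)\<^sup>2) \<le> 3 ^ k * \<epsilon>\<^sup>2"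
    using avg_sq_le_if_level_weight_sq_le[OF assms(1,2,3) h] by blast
  then have "real (card {R\<in>ksubsets V k. sqrt \<epsilon> < \<bar>f R - g R\<bar>})
      \<le> 5 powr (real k / 2) * sqrt \<epsilon> * real (card V choose k)"
    by (rule card_large_deviations_le[OF assms(1,4)])
  moreover have "level_weight V k r g = 0" if "l \<le> r \<and> r \<le> k" for r
    using level_weight_low_deg[OF assms(1) _ _ g] that by blast
  ultimately show ?thesis by blast
qed

end
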